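(* Let $J=p\ge1$, $\sigma_\varepsilon^2>0$, $I>0$, let $\mathbf{\Sigma}_\gamma$ be a nonnegative definite symmetric $J\times J$ matrix and $\mathbf{A}_{\bm\beta}$ a nonsingular $J\times J$ matrix. For an approximate design $\xi=(I_1,\dots,I_J)$ (reals $I_j\ge0$, $\sum_jI_j=I$) put $\mathbf{M}_0(\xi)=\mathrm{diag}(I_1,\dots,I_J)$ and $\mathbf{M}_{\bm\beta}(\xi)=\mathbf{A}_{\bm\beta}^{\mathrm T}\mathbf{M}_0(\xi)^{1/2}\big(\sigma_\varepsilon^2\mathbf{I}_J+\mathbf{M}_0(\xi)^{1/2}\mathbf{\Sigma}_\gamma\mathbf{M}_0(\xi)^{1/2}\big)^{-1}\mathbf{M}_0(\xi)^{1/2}\mathbf{A}_{\bm\beta}$ with $\mathbf{M}_0(\xi)^{1/2}=\mathrm{diag}(\sqrt{I_1},\dots,\sqrt{I_J})$. Let $\xi^*=(I_1^*,\dots,I_J^* )$ be a design with all $I_j^*>0$, and let $\psi_j$ denote the $j$th diagonal entry of $$\mathbf{M}_0(\xi^* )^{-1}\big(\sigma_\varepsilon^2\mathbf{M}_0(\xi^* )^{-1}+\mathbf{\Sigma}_\gamma\big)^{-1}\mathbf{M}_0(\xi^* )^{-1}.$$ Then $\xi^*$ is $D$-optimal if and only if $$I\psi_j=\mathrm{trace}\Big(\big(\sigma_\varepsilon^2\mathbf{M}_0(\xi^* )^{-1}+\mathbf{\Sigma}_\gamma\big)^{-1}\mathbf{M}_0(\xi^* )^{-1}\Big)\quad\text{for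 all } j=1,\dots,J.$$
   Context: $\mathbf{A}_{\bm\beta}$ is the Jacobian of the mean response curve at a fixed parameter $\bm\beta$, with as many parameters as time points. $\bm\beta$ is estimable under $\xi$ if $\mathbf{A}_{\bm\beta}$ has full column rank and its columns lie in the column space of $\mathbf{M}_0(\xi)$ (for $J=p$ this forces all $I_j>0$). A design $\xi^*$ is $D$-optimal if $\log\det\mathbf{M}_{\bm\beta}(\xi^* )\ge\log\det\mathbf{M}_{\bm\beta}(\xi)$ for all approximate designs $\xi$ with total $I$ under which $\bm\beta$ is estimable. *)

theory Defs
  imports "HOL-Analysis.Analysis"
begin

definition diag_mat :: "real^'n \<Rightarrow> real^'n^'n" where
  "diag_mat d = (\<chi> i j. if i = j then d $ i else 0)"

definition is_design :: "real \<Rightarrow> real^'n \<Rightarrow> bool" where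
  "is_design I xi \<longleftrightarrow> (\<forall>j. xi $ j \<ge> 0) \<and> (\<Sum>j\<in>UNIV. xi $ j) = I"

definition M0 :: "real^'n \<Rightarrow> real^'n^'n" where
  "M0 xi = diag_mat xi"

definition M0_sqrt :: "real^'n \<Rightarrow> real^'n^'n" where
  "M0_sqrt xi = diag_mat (\<chi> j. sqrt (xi $ j))"

definition Mbeta :: "real \<Rightarrow> real^'n^'n \<Rightarrow> real^'n^'n \<Rightarrow> real^'n \<Rightarrow> real^'n^'n" where
  "Mbeta s2 Sg A xi =
     transpose A ** M0_sqrt xi **
     matrix_inv (s2 *\<^sub>R mat 1 + M0_sqrt xi ** Sg ** M0_sqrt xi) **
     M0_sqrt xi ** A"

definition estimable :: "real^'n^'n \<Rightarrow> real^'n \<Rightarrow> bool" where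
  "estimable A xi \<longleftrightarrow> rank A = CARD('n) \<and> columns A \<subseteq> span (columns (M0 xi))"

definition D_optimal :: "real \<Rightarrow> real \<Rightarrow> real^'n^'n \<Rightarrow> real^'n^'n \<Rightarrow> real^'n \<Rightarrow> bool" where
  "D_optimal I s2 Sg A xs \<longleftrightarrow>
     is_design I xs \<and> estimable A xs \<and>
     (\<forall>xi. is_design I xi \<and> estimable A xi \<longrightarrow>
        ln (det (Mbeta s2 Sg A xi)) \<le> ln (det (Mbeta s2 Sg A xs)))"

end

theory Submission
  imports Defs
begin

text \<open>Put \<open>B(w) = s2 M0(w)\<^sup>-\<^sup>1 + Sg\<close>. Conjugating by \<open>M0(w)\<^sup>1\<^sup>/\<^sup>2\<close> shows that the information
  matrix is \<open>A\<^sup>T B(w)\<^sup>-\<^sup>1 A\<close>; as estimability forces all weights to be positive, \<open>D\<close>-optimality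
  means minimising \<open>det B(w)\<close> over positive designs of total \<open>I\<close>. Expanding along the diagonal,
  \<open>det B(w)\<close> is the sum over index sets \<open>F\<close> of \<open>c\<^sub>F \<Prod>i\<in>F. 1 / w\<^sub>i\<close>, where \<open>c\<^sub>F\<close> is
  \<open>s2 ^ card F\<close> times the principal minor of \<open>Sg\<close> outside \<open>F\<close>, hence nonnegative. The diagonal
  entries of \<open>B(w)\<^sup>-\<^sup>1\<close> are cofactors, which turns the stated condition into: \<open>P\<^sub>j(w) / w\<^sub>j\<close>
  does not depend on \<open>j\<close>, where \<open>P\<^sub>j\<close> is \<open>-w\<^sub>j\<close> times the partial derivative of \<open>det B(w)\<close>
  in \<open>w\<^sub>j\<close>. This is necessary by Fermat's rule along the feasible lines \<open>w + t (e\<^sub>k - e\<^sub>j)\<close>.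
  It is sufficient because \<open>ln y \<le> y - 1\<close> bounds \<open>det B(w') - det B(w)\<close> from below by
  \<open>\<Sum>j. P\<^sub>j ln (w\<^sub>j / w'\<^sub>j)\<close>, a nonnegative multiple of the relative entropy of \<open>w\<close>
  with respect to \<open>w'\<close>.\<close>

section \<open>Diagonal matrices and inverses\<close>

lemma diag_mat_mult_component: "(diag_mat a ** M) $ i $ j = a$i * M$i$j"
proof -
  have "(diag_mat a ** M) $ i $ j = (\<Sum>k\<in>UNIV. (if i = k then a$i else 0) * M$k$j)"
    by (simp add: diag_mat_def matrix_matrix_mult_def)
  also have "\<dots> = (\<Sum>k\<in>UNIV. if i = k then a$i * M$k$j else 0)"
    by (rule sum.cong) auto
  finally show ?thesis by simp
qed

lemma mult_diag_mat_component: "(M ** diag_mat a) $ i $ j = M$i$j * a$j"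
proof -
  have "(M ** diag_mat a) $ i $ j = (\<Sum>k\<in>UNIV. M$i$k * (if k = j then a$k else 0))"
    by (simp add: diag_mat_def matrix_matrix_mult_def)
  also have "\<dots> = (\<Sum>k\<in>UNIV. if k = j then M$i$k * a$k else 0)"
    by (rule sum.cong) auto
  finally show ?thesis by simp
qed

lemma diag_mat_mult_diag_mat: "diag_mat a ** diag_mat b = diag_mat (\<chi> i. a$i * b$i)"
  unfolding vec_eq_iff diag_mat_mult_component by (simp add: diag_mat_def)

lemma diag_mat_eq_mat: "diag_mat (\<chi> i. c) = mat c"
  by (simp add: vec_eq_iff diag_mat_def mat_def)

lemma matrix_add_rdistrib: "(A + B) ** C = A ** C + B ** C"
  by (vector matrix_matrix_mult_def sum.distrib[symmetric] field_simps)

lemma matrix_inv_inverse: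
  assumes "invertible A"
  shows "A ** matrix_inv A = mat 1" and "matrix_inv A ** A = mat 1"
  using someI_ex[OF assms[unfolded invertible_def]] unfolding matrix_inv_def by auto

lemma matrix_inv_unique:
  fixes A B :: "real^'n^'n"
  assumes "A ** B = mat 1"
  shows "matrix_inv A = B"
proof -
  have "invertible A"
    using assms matrix_left_right_inverse unfolding invertible_def by blast
  then have "matrix_inv A = matrix_inv A ** (A ** B)"
    using assms by simp
  also have "\<dots> = B"
    using \<open>invertible A\<close> by (simp add: matrix_mul_assoc matrix_inv_inverse(2))
  finally show ?thesis .
qed

lemma det_matrix_inv:
  fixes A :: "real^'n^'n"
  assumes "invertible A"
  shows "det (matrix_inv A) = 1 / det A"
  using det_mul[of A "matrix_inv A"] matrix_inv_inverse(1)[OF assms] assms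
  by (simp add: invertible_det_nz field_simps)

lemma matrix_inv_diag_mat:
  assumes "\<forall>i. a$i \<noteq> 0"
  shows "matrix_inv (diag_mat a) = diag_mat (\<chi> i. 1 / a$i)"
  using assms by (intro matrix_inv_unique) (simp add: diag_mat_mult_diag_mat flip: diag_mat_eq_mat)

section \<open>Expanding a determinant along the diagonal\<close>

lemma sum_Pow_insert:
  assumes "finite T" and "z \<notin> T"
  shows "(\<Sum>F\<in>Pow (insert z T). g F) = (\<Sum>F\<in>Pow T. g F) + (\<Sum>F\<in>Pow T. g (insert z F))"
proof -
  have "(\<Sum>F\<in>Pow (insert z T). g F) = (\<Sum>F\<in>Pow T. g F) + (\<Sum>F\<in>insert z ` Pow T. g F)"
    unfolding Pow_insert using assms by (intro sum.union_disjoint) auto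
  also have "(\<Sum>F\<in>insert z ` Pow T. g F) = (\<Sum>F\<in>Pow T. g (insert z F))"
    using assms by (intro sum.reindex[unfolded comp_def]) (auto simp: inj_on_def)
  finally show ?thesis .
qed

lemma det_add_diag_rows_on:
  fixes d :: "'n::finite \<Rightarrow> 'a::comm_ring_1" and r c :: "'n \<Rightarrow> 'a^'n"
  assumes "finite T"
  shows "det (\<chi> i. if i \<in> T then d i *s axis i 1 + r i else c i) =
    (\<Sum>F\<in>Pow T. (\<Prod>i\<in>F. d i) * det (\<chi> i. if i \<in> T then (if i \<in> F then axis i 1 else r i) else c i))"
  using assms
proof (induction T arbitrary: c rule: finite_induct)
  case empty
  then show ?case by simp
next
  case (insert z T)
  let ?c1 = "\<lambda>i. if i = z then axis z 1 else c i"
  let ?c2 = "\<lambda>i. if i = z then r z else c i"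
  let ?M = "\<lambda>i. if i \<in> T then d i *s axis i 1 + r i else c i"
  let ?N = "\<lambda>c F. (\<chi> i. if i \<in> T then (if i \<in> F then axis i 1 else r i) else c i)"
  let ?g = "\<lambda>F. (\<Prod>i\<in>F. d i) * det (\<chi> i. if i \<in> insert z T then (if i \<in> F then axis i 1 else r i) else c i)"
  have "(\<chi> i. if i \<in> insert z T then d i *s axis i 1 + r i else c i)
      = (\<chi> i. if i = z then d z *s axis z 1 + r z else ?M i)"
    by (rule Cart_lambda_cong) auto
  then have "det (\<chi> i. if i \<in> insert z T then d i *s axis i 1 + r i else c i)
     = d z * det (\<chi> i. if i = z then axis z 1 else ?M i) + det (\<chi> i. if i = z then r z else ?M i)"
    using det_row_add[of z "\<lambda>_. d z *s axis z 1" "\<lambda>_. r z" ?M] det_row_mul[of z "d z" "\<lambda>_. axis z 1" ?M]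
    by simp
  also have "(\<chi> i. if i = z then axis z 1 else ?M i) = (\<chi> i. if i \<in> T then d i *s axis i 1 + r i else ?c1 i)"
    using insert.hyps by (intro Cart_lambda_cong) auto
  also have "(\<chi> i. if i = z then r z else ?M i) = (\<chi> i. if i \<in> T then d i *s axis i 1 + r i else ?c2 i)"
    using insert.hyps by (intro Cart_lambda_cong) auto
  finally have expand: "det (\<chi> i. if i \<in> insert z T then d i *s axis i 1 + r i else c i) =
     d z * (\<Sum>F\<in>Pow T. (\<Prod>i\<in>F. d i) * det (?N ?c1 F)) + (\<Sum>F\<in>Pow T. (\<Prod>i\<in>F. d i) * det (?N ?c2 F))"
    by (simp only: insert.IH)
  have with_z: "?g (insert z F) = d z * ((\<Prod>i\<in>F. d i) * det (?N ?c1 F))" if "F \<in> Pow T" for F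
  proof -
    have "finite F" "z \<notin> F" using that insert.hyps finite_subset by auto
    moreover have "(\<chi> i. if i \<in> insert z T then (if i \<in> insert z F then axis i 1 else r i) else c i) = ?N ?c1 F"
      using insert.hyps by (intro Cart_lambda_cong) auto
    ultimately show ?thesis by simp
  qed
  have without_z: "?g F = (\<Prod>i\<in>F. d i) * det (?N ?c2 F)" if "F \<in> Pow T" for F
  proof -
    have "(\<chi> i. if i \<in> insert z T then (if i \<in> F then axis i 1 else r i) else c i) = ?N ?c2 F"
      using that insert.hyps by (intro Cart_lambda_cong) auto
    then show ?thesis by simp
  qed
  show ?case
    unfolding expand sum_Pow_insert[OF insert.hyps] using with_z without_z by (simp add: sum_distrib_left)
qed

lemma det_add_diag_rows:
  fixes d :: "'n::finite \<Rightarrow> 'a::comm_ring_1" and r :: "'n \<Rightarrow> 'a^'n"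
  shows "det (\<chi> i. d i *s axis i 1 + r i) =
    (\<Sum>F\<in>UNIV. (\<Prod>i\<in>F. d i) * det (\<chi> i. if i \<in> F then axis i 1 else r i))"
  using det_add_diag_rows_on[of "UNIV :: 'n set" d r r] by simp

text \<open>The principal minor of \<open>M\<close> on the indices outside \<open>F\<close>.\<close>
definition compl_minor :: "real^'n^'n \<Rightarrow> 'n set \<Rightarrow> real" where
  "compl_minor M F = det (\<chi> i. if i \<in> F then axis i 1 else M$i)"

lemma diag_mat_add_rows: "diag_mat d + M = (\<chi> i. d$i *s axis i 1 + M$i)"
  by (simp add: vec_eq_iff diag_mat_def axis_def)

lemma det_diag_mat_add: "det (diag_mat d + M) = (\<Sum>F\<in>UNIV. (\<Prod>i\<in>F. d$i) * compl_minor M F)"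
  unfolding diag_mat_add_rows det_add_diag_rows compl_minor_def ..

lemma det_diag_mat_add_cofactor:
  "d$j * det (\<chi> i. if i = j then axis j 1 else (diag_mat d + M)$i)
     = (\<Sum>F | j \<in> F. (\<Prod>i\<in>F. d$i) * compl_minor M F)"
proof -
  define d' where "d' i = (if i = j then 1 else d$i)" for i
  define r where "r i = (if i = j then 0 else M$i)" for i
  have summand: "d$j * ((\<Prod>i\<in>F. d' i) * det (\<chi> i. if i \<in> F then axis i 1 else r i))
      = (if j \<in> F then (\<Prod>i\<in>F. d$i) * compl_minor M F else 0)" for F
  proof (cases "j \<in> F")
    case True
    have "d$j * (\<Prod>i\<in>F. d' i) = (\<Prod>i\<in>F. d$i)"
      using prod.remove[OF finite True, of d'] prod.remove[OF finite True, of "($) d"]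
      by (simp add: d'_def)
    moreover have "(\<chi> i. if i \<in> F then axis i 1 else r i) = (\<chi> i. if i \<in> F then axis i 1 else M$i)"
      using True by (intro Cart_lambda_cong) (auto simp: r_def)
    ultimately show ?thesis
      using True by (simp add: compl_minor_def)
  next
    case False
    then have "row j (\<chi> i. if i \<in> F then axis i 1 else r i) = 0"
      by (simp add: row_def r_def vec_eq_iff)
    then show ?thesis
      using False det_zero_row(1) by auto
  qed
  have "(\<chi> i. if i = j then axis j 1 else (diag_mat d + M)$i) = (\<chi> i. d' i *s axis i 1 + r i)"
    by (simp add: diag_mat_add_rows vec_eq_iff d'_def r_def)
  then have "d$j * det (\<chi> i. if i = j then axis j 1 else (diag_mat d + M)$i)
      = (\<Sum>F\<in>UNIV. if j \<in> F then (\<Prod>i\<in>F. d$i) * compl_minor M F else 0)"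
    by (simp add: det_add_diag_rows sum_distrib_left summand)
  then show ?thesis
    using sum.inter_filter[of UNIV "\<lambda>F. (\<Prod>i\<in>F. d$i) * compl_minor M F" "\<lambda>F. j \<in> F"] by simp
qed

lemma matrix_inv_diag_entry:
  fixes B :: "real^'n^'n"
  assumes "invertible B"
  shows "matrix_inv B $ j $ j * det B = det (\<chi> i. if i = j then axis j 1 else B$i)"
proof -
  let ?G = "matrix_inv B"
  have rows: "row i B = B$i" for i
    by (simp add: row_def vec_eq_iff)
  have "(\<Sum>i\<in>UNIV. ?G$j$i *s row i B) = row j (?G ** B)"
    by (simp add: vec_eq_iff row_def matrix_matrix_mult_def sum_component)
  also have "\<dots> = axis j 1"
    by (simp add: matrix_inv_inverse(2)[OF assms] row_def vec_eq_iff mat_def axis_def)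
  finally have row_j: "(\<Sum>i\<in>UNIV. ?G$j$i *s B$i) = axis j 1"
    by (simp only: rows)
  from cramer_lemma_transpose[of j "?G$j" B] show ?thesis
    unfolding rows row_j by (rule sym)
qed

section \<open>Principal minors of positive semidefinite matrices\<close>

lemma compl_minor_nonzero_if_pos_def:
  fixes M :: "real^'n^'n"
  assumes pd: "\<And>x. x \<noteq> 0 \<Longrightarrow> 0 < x \<bullet> (M *v x)"
  shows "compl_minor M F \<noteq> 0"
proof -
  let ?N = "\<chi> i. if i \<in> F then axis i 1 else M$i"
  have "v = 0" if "?N *v v = 0" for v
  proof -
    have component: "(if i \<in> F then v$i else (M *v v)$i) = 0" for i
      using arg_cong[OF that, of "\<lambda>u. u$i"]
      by (cases "i \<in> F") (simp_all add: matrix_vector_mul_component inner_axis')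
    have "v \<bullet> (M *v v) = (\<Sum>i\<in>UNIV. v$i * (M *v v)$i)"
      by (simp add: inner_vec_def)
    also have "\<dots> = 0"
      using component by (intro sum.neutral) (metis mult_eq_0_iff)
    finally show "v = 0"
      using pd by force
  qed
  then have "inj ((*v) ?N)"
    by (simp add: vec.inj_iff_eq_0)
  then show ?thesis
    using det_nz_iff_inj[OF matrix_vector_mul_linear[of ?N]]
    by (simp add: compl_minor_def matrix_of_matrix_vector_mul)
qed

lemma continuous_on_det_affine:
  fixes A D :: "real^'n^'n"
  shows "continuous_on S (\<lambda>s. det (A + s *\<^sub>R D))"
  unfolding det_def by (intro continuous_intros)

text \<open>On the segment from the identity to \<open>M\<close> the matrix is positive definite before it reaches
  \<open>M\<close>, so the minor cannot change sign along it.\<close>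
lemma compl_minor_nonneg:
  fixes M :: "real^'n^'n"
  assumes psd: "\<forall>x. 0 \<le> x \<bullet> (M *v x)"
  shows "0 \<le> compl_minor M F"
proof (rule ccontr)
  assume neg: "\<not> 0 \<le> compl_minor M F"
  define P where "P s = (1 - s) *\<^sub>R mat 1 + s *\<^sub>R M" for s :: real
  define f where "f s = compl_minor (P s) F" for s
  define E where "E = (\<chi> i. if i \<in> F then 0 else M$i - mat 1 $ i)"
  have f_affine: "f s = det (mat 1 + s *\<^sub>R E)" for s
    unfolding f_def compl_minor_def
    by (rule arg_cong[where f = det]) (simp add: P_def E_def vec_eq_iff axis_def mat_def algebra_simps)
  then have cont: "continuous_on {0..1} f"
    by (simp add: continuous_on_det_affine)
  have "f 0 = 1"
    by (simp add: f_affine)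
  moreover have "f 1 = compl_minor M F"
    by (simp add: f_def P_def)
  ultimately obtain s where "0 \<le> s" "s \<le> 1" "f s = 0"
    using IVT2'[of f 1 0 0, OF _ _ _ cont] neg by force
  moreover have "f s \<noteq> 0" if "0 \<le> s" "s < 1" for s
    unfolding f_def
  proof (rule compl_minor_nonzero_if_pos_def)
    fix x :: "real^'n"
    assume "x \<noteq> 0"
    then have "0 < (1 - s) * (x \<bullet> x) + s * (x \<bullet> (M *v x))"
      using psd that by (simp add: add_pos_nonneg)
    then show "0 < x \<bullet> (P s *v x)"
      by (simp add: P_def matrix_vector_mult_add_rdistrib inner_add_right flip: scaleR_matrix_vector_assoc)
  qed
  ultimately show False
    using neg \<open>f 1 = compl_minor M F\<close> by (cases "s = 1") auto
qed

section \<open>Minimising a polynomial in the reciprocals\<close>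

definition recip_poly :: "('n set \<Rightarrow> real) \<Rightarrow> real^'n \<Rightarrow> real" where
  "recip_poly c w = (\<Sum>F\<in>UNIV. c F * (\<Prod>i\<in>F. 1 / w$i))"

text \<open>\<open>recip_poly_part c w j\<close> is \<open>-w\<^sub>j\<close> times the partial derivative of \<open>recip_poly c w\<close> in \<open>w\<^sub>j\<close>.\<close>
definition recip_poly_part :: "('n set \<Rightarrow> real) \<Rightarrow> real^'n \<Rightarrow> 'n \<Rightarrow> real" where
  "recip_poly_part c w j = (\<Sum>F | j \<in> F. c F * (\<Prod>i\<in>F. 1 / w$i))"

lemma recip_poly_pos:
  assumes "\<forall>F. 0 \<le> c F" and "0 < c F" and "\<forall>i. 0 < w$i"
  shows "0 < recip_poly c w"
proof -
  have "0 < c F * (\<Prod>i\<in>F. 1 / w$i)"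
    using assms by (simp add: prod_pos)
  also have "\<dots> \<le> recip_poly c w"
    unfolding recip_poly_def using assms
    by (intro member_le_sum) (auto intro!: mult_nonneg_nonneg prod_nonneg simp: less_imp_le)
  finally show ?thesis .
qed

lemma recip_poly_part_nonneg:
  assumes "\<forall>F. 0 \<le> c F" and "\<forall>i. 0 < w$i"
  shows "0 \<le> recip_poly_part c w j"
  unfolding recip_poly_part_def using assms
  by (auto intro!: sum_nonneg mult_nonneg_nonneg prod_nonneg simp: less_imp_le)

lemma sum_recip_poly_terms_mult_sum:
  "(\<Sum>F\<in>UNIV. c F * (\<Prod>i\<in>F. 1 / w$i) * (\<Sum>i\<in>F. g i)) = (\<Sum>i\<in>UNIV. recip_poly_part c w i * g i)"
proof -
  have "(\<Sum>F\<in>UNIV. c F * (\<Prod>i\<in>F. 1 / w$i) * (\<Sum>i\<in>F. g i))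
      = (\<Sum>F\<in>UNIV. \<Sum>i\<in>{i \<in> UNIV. i \<in> F}. c F * (\<Prod>i\<in>F. 1 / w$i) * g i)"
    by (simp add: sum_distrib_left)
  also have "\<dots> = (\<Sum>i\<in>UNIV. \<Sum>F\<in>{F \<in> UNIV. i \<in> F}. c F * (\<Prod>i\<in>F. 1 / w$i) * g i)"
    by (rule sum.swap_restrict) simp_all
  finally show ?thesis
    by (simp add: recip_poly_part_def sum_distrib_right)
qed

lemma has_field_derivative_recip_poly_line:
  assumes "\<forall>i. x$i \<noteq> 0"
  shows "((\<lambda>t. recip_poly c (x + t *\<^sub>R v)) has_field_derivative
           - (\<Sum>i\<in>UNIV. recip_poly_part c x i * (v$i / x$i))) (at 0)"
proof -
  have factor: "((\<lambda>t. 1 / (x$i + t * v$i)) has_field_derivative - v$i / (x$i)\<^sup>2) (at 0)" for i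
    using assms by (auto intro!: derivative_eq_intros simp: power2_eq_square)
  have "((\<lambda>t. \<Prod>i\<in>F. 1 / (x$i + t * v$i)) has_field_derivative
           (\<Prod>i\<in>F. 1 / x$i) * (\<Sum>i\<in>F. - v$i / (x$i)\<^sup>2 / (1 / x$i))) (at 0)" for F
    using has_field_derivative_prod'[of F "\<lambda>i t. 1 / (x$i + t * v$i)", OF _ factor] assms by simp
  moreover have "(\<Sum>i\<in>F. - v$i / (x$i)\<^sup>2 / (1 / x$i)) = - (\<Sum>i\<in>F. v$i / x$i)" for F
    using assms by (simp add: power2_eq_square sum_negf)
  ultimately have "((\<lambda>t. \<Prod>i\<in>F. 1 / (x$i + t * v$i)) has_field_derivative
           - (\<Prod>i\<in>F. 1 / x$i) * (\<Sum>i\<in>F. v$i / x$i)) (at 0)" for F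
    by simp
  then have "((\<lambda>t. recip_poly c (x + t *\<^sub>R v)) has_field_derivative
           (\<Sum>F\<in>UNIV. c F * (- (\<Prod>i\<in>F. 1 / x$i) * (\<Sum>i\<in>F. v$i / x$i)))) (at 0)"
    unfolding recip_poly_def vector_add_component vector_scaleR_component real_scaleR_def
    by (intro DERIV_sum DERIV_cmult) simp
  then show ?thesis
    using sum_recip_poly_terms_mult_sum[of c x "\<lambda>i. v$i / x$i"]
    by (simp add: sum_negf mult.assoc)
qed

lemma recip_poly_part_div_eq_if_min:
  fixes x :: "real^'n"
  assumes x: "\<forall>i. 0 < x$i"
    and min: "\<forall>w. (\<forall>i. 0 < w$i) \<and> (\<Sum>i\<in>UNIV. w$i) = (\<Sum>i\<in>UNIV. x$i)
                \<longrightarrow> recip_poly c x \<le> recip_poly c w"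
  shows "recip_poly_part c x j / x$j = recip_poly_part c x k / x$k"
proof -
  define v :: "real^'n" where "v = axis k 1 - axis j 1"
  define d where "d = min (x$j) (x$k)"
  have "recip_poly_part c x i * (v$i / x$i)
      = (if i = k then recip_poly_part c x i / x$i else 0) - (if i = j then recip_poly_part c x i / x$i else 0)" for i
    by (simp add: v_def axis_def)
  then have "(\<Sum>i\<in>UNIV. recip_poly_part c x i * (v$i / x$i))
      = recip_poly_part c x k / x$k - recip_poly_part c x j / x$j"
    by (simp add: sum_subtractf)
  moreover have "((\<lambda>t. recip_poly c (x + t *\<^sub>R v)) has_field_derivative
           - (\<Sum>i\<in>UNIV. recip_poly_part c x i * (v$i / x$i))) (at 0)"
    using x by (intro has_field_derivative_recip_poly_line) (simp add: less_imp_neq[symmetric])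
  moreover have "0 < d"
    using x by (simp add: d_def)
  moreover have "recip_poly c (x + 0 *\<^sub>R v) \<le> recip_poly c (x + t *\<^sub>R v)" if "\<bar>0 - t\<bar> < d" for t
  proof -
    have "0 < x$i + t * v$i" for i
      using x[rule_format, of i] that by (auto simp: v_def axis_def d_def)
    moreover have "(\<Sum>i\<in>UNIV. v$i) = 0"
      by (simp add: v_def sum_subtractf axis_def)
    ultimately show ?thesis
      using min by (simp add: sum.distrib sum_distrib_left[symmetric])
  qed
  ultimately show ?thesis
    using DERIV_local_min[of "\<lambda>t. recip_poly c (x + t *\<^sub>R v)"] by fastforce
qed

lemma sum_diff_le_sum_mult_ln_div:
  fixes x w :: "'a \<Rightarrow> real"
  assumes "\<forall>i\<in>S. 0 < x i" and "\<forall>i\<in>S. 0 < w i"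
  shows "(\<Sum>i\<in>S. x i - w i) \<le> (\<Sum>i\<in>S. x i * ln (x i / w i))"
proof (rule sum_mono)
  fix i assume "i \<in> S"
  then have xi: "0 < x i" and wi: "0 < w i"
    using assms by auto
  then have "x i * ln (w i / x i) \<le> x i * (w i / x i - 1)"
    by (intro mult_left_mono ln_le_minus_one) simp_all
  moreover have "ln (x i / w i) = - ln (w i / x i)"
    using xi wi by (simp add: ln_div)
  moreover have "x i * (w i / x i - 1) = w i - x i"
    using xi by (simp add: field_simps)
  ultimately show "x i - w i \<le> x i * ln (x i / w i)"
    by simp
qed

text \<open>Both inequalities are \<open>ln y \<le> y - 1\<close>: once for the ratios \<open>\<Prod>i\<in>F. x\<^sub>i / w\<^sub>i\<close>
  weighted by the terms of \<open>recip_poly c x\<close>, once in the form of Gibbs' inequality.\<close>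
lemma recip_poly_min_if_part_proportional:
  assumes c: "\<forall>F. 0 \<le> c F" and x: "\<forall>i. 0 < x$i" and w: "\<forall>i. 0 < w$i"
    and sums: "(\<Sum>i\<in>UNIV. w$i) = (\<Sum>i\<in>UNIV. x$i)"
    and proportional: "\<forall>i. recip_poly_part c x i = \<kappa> * x$i"
  shows "recip_poly c x \<le> recip_poly c w"
proof -
  define t where "t F = c F * (\<Prod>i\<in>F. 1 / x$i)" for F
  define a where "a F = (\<Prod>i\<in>F. x$i / w$i)" for F
  have a_pos: "0 < a F" for F
    unfolding a_def using x w by (simp add: prod_pos)
  have "0 \<le> \<kappa> * x$i" for i
    using recip_poly_part_nonneg[OF c x] proportional by metis
  then have "0 \<le> \<kappa>"
    using x by (metis zero_le_mult_iff not_less)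
  have "0 = \<kappa> * (\<Sum>i\<in>UNIV. x$i - w$i)"
    using sums by (simp add: sum_subtractf)
  also have "\<dots> \<le> \<kappa> * (\<Sum>i\<in>UNIV. x$i * ln (x$i / w$i))"
    using \<open>0 \<le> \<kappa>\<close> x w by (intro mult_left_mono sum_diff_le_sum_mult_ln_div) auto
  also have "\<dots> = (\<Sum>i\<in>UNIV. recip_poly_part c x i * ln (x$i / w$i))"
    by (simp add: proportional sum_distrib_left mult.assoc)
  also have "\<dots> = (\<Sum>F\<in>UNIV. t F * ln (a F))"
    unfolding t_def a_def using x w
    by (simp add: ln_prod less_imp_neq[symmetric] flip: sum_recip_poly_terms_mult_sum)
  also have "\<dots> \<le> (\<Sum>F\<in>UNIV. t F * (a F - 1))"
    using a_pos c x unfolding t_def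
    by (intro sum_mono mult_left_mono ln_le_minus_one mult_nonneg_nonneg prod_nonneg)
      (auto simp: less_imp_le)
  also have "\<dots> = recip_poly c w - recip_poly c x"
  proof -
    have ta: "t F * a F = c F * (\<Prod>i\<in>F. 1 / w$i)" for F
      unfolding t_def a_def mult.assoc prod.distrib[symmetric]
      using x by (simp add: less_imp_neq[symmetric])
    then show ?thesis
      unfolding recip_poly_def right_diff_distrib sum_subtractf ta by (simp add: t_def)
  qed
  finally show ?thesis
    by simp
qed

lemma recip_poly_min_iff:
  fixes x :: "real^'n"
  assumes c: "\<forall>F. 0 \<le> c F" and x: "\<forall>i. 0 < x$i"
  shows "(\<forall>w. (\<forall>i. 0 < w$i) \<and> (\<Sum>i\<in>UNIV. w$i) = (\<Sum>i\<in>UNIV. x$i)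
            \<longrightarrow> recip_poly c x \<le> recip_poly c w)
     \<longleftrightarrow> (\<forall>j. (\<Sum>i\<in>UNIV. x$i) * recip_poly_part c x j / x$j = (\<Sum>i\<in>UNIV. recip_poly_part c x i))"
    (is "?min \<longleftrightarrow> ?balanced")
proof
  assume ?min
  show ?balanced
  proof
    fix j
    define \<rho> where "\<rho> = recip_poly_part c x j / x$j"
    have part: "recip_poly_part c x i = x$i * \<rho>" for i
    proof -
      have "recip_poly_part c x i = x$i * (recip_poly_part c x i / x$i)"
        using x[rule_format, of i] by simp
      then show ?thesis
        using recip_poly_part_div_eq_if_min[OF x \<open>?min\<close>, of i j] by (simp add: \<rho>_def)
    qed
    have "(\<Sum>i\<in>UNIV. recip_poly_part c x i) = (\<Sum>i\<in>UNIV. x$i) * \<rho>"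
      by (simp add: part sum_distrib_right)
    moreover have "(\<Sum>i\<in>UNIV. x$i) * recip_poly_part c x j / x$j = (\<Sum>i\<in>UNIV. x$i) * \<rho>"
      by (simp add: \<rho>_def)
    ultimately show "(\<Sum>i\<in>UNIV. x$i) * recip_poly_part c x j / x$j = (\<Sum>i\<in>UNIV. recip_poly_part c x i)"
      by simp
  qed
next
  assume balanced: ?balanced
  have "0 < (\<Sum>i\<in>UNIV. x$i)"
    using x by (simp add: sum_pos)
  then have "recip_poly_part c x i = (\<Sum>i\<in>UNIV. recip_poly_part c x i) / (\<Sum>i\<in>UNIV. x$i) * x$i" for i
    using balanced[rule_format, of i] x[rule_format, of i] by (simp add: field_simps)
  then show ?min
    using recip_poly_min_if_part_proportional[OF c x] by blast
qed

section \<open>The information matrix\<close>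

definition minor_coeff :: "real \<Rightarrow> real^'n^'n \<Rightarrow> 'n set \<Rightarrow> real" where
  "minor_coeff s2 Sg F = s2 ^ card F * compl_minor Sg F"

lemma minor_coeff_nonneg:
  assumes "0 < s2" and "\<forall>x. 0 \<le> x \<bullet> (Sg *v x)"
  shows "\<forall>F. 0 \<le> minor_coeff s2 Sg F"
  using assms by (auto simp: minor_coeff_def intro!: mult_nonneg_nonneg compl_minor_nonneg)

lemma scaleR_matrix_inv_M0:
  assumes "\<forall>i. 0 < w$i"
  shows "s2 *\<^sub>R matrix_inv (M0 w) = diag_mat (\<chi> i. s2 / w$i)"
  using assms unfolding M0_def
  by (simp add: matrix_inv_diag_mat less_imp_neq[symmetric]) (simp add: diag_mat_def vec_eq_iff)

lemma prod_const_div: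
  fixes a :: real
  shows "(\<Prod>i\<in>F. a / w$i) = a ^ card F * (\<Prod>i\<in>F. 1 / w$i)"
  by (induction F rule: infinite_finite_induct) simp_all

lemma det_design_matrix:
  assumes "\<forall>i. 0 < w$i"
  shows "det (s2 *\<^sub>R matrix_inv (M0 w) + Sg) = recip_poly (minor_coeff s2 Sg) w"
  unfolding scaleR_matrix_inv_M0[OF assms] det_diag_mat_add recip_poly_def minor_coeff_def
  by (simp add: prod_const_div[where a = s2] ac_simps)

lemma recip_poly_minor_coeff_pos:
  assumes "0 < s2" and "\<forall>x. 0 \<le> x \<bullet> (Sg *v x)" and "\<forall>i. 0 < w$i"
  shows "0 < recip_poly (minor_coeff s2 Sg) w"
proof -
  have "(\<chi> i. if i \<in> UNIV then axis i 1 else Sg$i) = mat 1"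
    by (simp add: vec_eq_iff axis_def mat_def)
  then have "compl_minor Sg UNIV = 1"
    unfolding compl_minor_def by (simp only: det_I)
  then have "0 < minor_coeff s2 Sg UNIV"
    using assms by (simp add: minor_coeff_def)
  then show ?thesis
    using assms minor_coeff_nonneg recip_poly_pos by blast
qed

lemma det_design_matrix_pos:
  assumes "0 < s2" and "\<forall>x. 0 \<le> x \<bullet> (Sg *v x)" and "\<forall>i. 0 < w$i"
  shows "0 < det (s2 *\<^sub>R matrix_inv (M0 w) + Sg)"
  using recip_poly_minor_coeff_pos[OF assms] det_design_matrix[OF assms(3)] by simp

lemma design_matrix_inv_diag:
  assumes s2: "0 < s2" and psd: "\<forall>x. 0 \<le> x \<bullet> (Sg *v x)" and w: "\<forall>i. 0 < w$i"
  shows "s2 * matrix_inv (s2 *\<^sub>R matrix_inv (M0 w) + Sg) $ j $ j * recip_poly (minor_coeff s2 Sg) w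
           = w$j * recip_poly_part (minor_coeff s2 Sg) w j"
proof -
  let ?d = "\<chi> i. s2 / w$i"
  let ?B = "s2 *\<^sub>R matrix_inv (M0 w) + Sg"
  have "invertible ?B"
    using det_design_matrix_pos[OF assms] by (simp add: invertible_det_nz)
  then have "?d$j * (matrix_inv ?B $ j $ j * det ?B) = ?d$j * det (\<chi> i. if i = j then axis j 1 else ?B$i)"
    by (simp add: matrix_inv_diag_entry)
  also have "\<dots> = (\<Sum>F | j \<in> F. (\<Prod>i\<in>F. ?d$i) * compl_minor Sg F)"
    unfolding scaleR_matrix_inv_M0[OF w] by (rule det_diag_mat_add_cofactor)
  also have "\<dots> = recip_poly_part (minor_coeff s2 Sg) w j"
    unfolding recip_poly_part_def minor_coeff_def by (simp add: prod_const_div[where a = s2] ac_simps)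
  finally have "s2 / w$j * (matrix_inv ?B $ j $ j * recip_poly (minor_coeff s2 Sg) w)
      = recip_poly_part (minor_coeff s2 Sg) w j"
    unfolding det_design_matrix[OF w] by simp
  then show ?thesis
    using w[rule_format, of j] by (simp add: field_simps)
qed

lemma det_Mbeta:
  assumes s2: "0 < s2" and psd: "\<forall>x. 0 \<le> x \<bullet> (Sg *v x)" and w: "\<forall>i. 0 < w$i"
  shows "det (Mbeta s2 Sg A w) = (det A)\<^sup>2 / recip_poly (minor_coeff s2 Sg) w"
proof -
  let ?S = "M0_sqrt w"
  let ?B = "s2 *\<^sub>R matrix_inv (M0 w) + Sg"
  have sqrt_w: "0 < sqrt (w$i)" "sqrt (w$i) * (s2 / w$i) * sqrt (w$i) = s2" for i
  proof -
    show "0 < sqrt (w$i)"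
      using w by simp
    have "sqrt (w$i) * (s2 / w$i) * sqrt (w$i) = s2 * (sqrt (w$i) * sqrt (w$i)) / w$i"
      by simp
    then show "sqrt (w$i) * (s2 / w$i) * sqrt (w$i) = s2"
      using w[rule_format, of i] by simp
  qed
  have "?S ** diag_mat (\<chi> i. s2 / w$i) ** ?S = s2 *\<^sub>R mat 1"
    unfolding M0_sqrt_def diag_mat_mult_diag_mat vec_lambda_beta sqrt_w(2)
    by (simp add: vec_eq_iff diag_mat_def mat_def)
  then have SBS: "s2 *\<^sub>R mat 1 + ?S ** Sg ** ?S = ?S ** ?B ** ?S"
    unfolding scaleR_matrix_inv_M0[OF w] by (simp add: matrix_add_ldistrib matrix_add_rdistrib)
  have "0 < det ?S"
    unfolding M0_sqrt_def using sqrt_w by (simp add: det_diagonal diag_mat_def prod_pos)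
  moreover have "0 < det ?B"
    using det_design_matrix_pos[OF s2 psd w] .
  ultimately have "invertible (?S ** ?B ** ?S)"
    by (simp add: invertible_det_nz det_mul)
  then have "det (Mbeta s2 Sg A w) = det A * det ?S * (1 / (det ?S * det ?B * det ?S)) * det ?S * det A"
    unfolding Mbeta_def SBS by (simp add: det_mul det_matrix_inv det_transpose)
  also have "\<dots> = (det A)\<^sup>2 / det ?B"
    using \<open>0 < det ?S\<close> by (simp add: power2_eq_square)
  finally show ?thesis
    unfolding det_design_matrix[OF w] .
qed

lemma estimable_iff_pos:
  fixes A :: "real^'n^'n" and xi :: "real^'n"
  assumes A: "invertible A" and nonneg: "\<forall>j. 0 \<le> xi$j"
  shows "estimable A xi \<longleftrightarrow> (\<forall>j. 0 < xi$j)"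
proof
  assume pos: "\<forall>j. 0 < xi$j"
  have "rank A = CARD('n)"
    using inj_matrix_vector_mult[OF A] full_rank_injective by blast
  moreover have "M0 xi ** diag_mat (\<chi> i. 1 / xi$i) = mat 1"
    using pos unfolding M0_def diag_mat_mult_diag_mat
    by (simp add: less_imp_neq[symmetric] flip: diag_mat_eq_mat)
  then have "span (columns (M0 xi)) = UNIV"
    using matrix_right_invertible_span_columns span_vec_eq by blast
  ultimately show "estimable A xi"
    unfolding estimable_def by simp
next
  assume est: "estimable A xi"
  show "\<forall>j. 0 < xi$j"
  proof (rule ccontr)
    assume "\<not> (\<forall>j. 0 < xi$j)"
    then obtain j where "xi$j = 0"
      using nonneg by (metis less_eq_real_def)
    define H where "H = {v :: real^'n. v$j = 0}"
    have "subspace H"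
      unfolding H_def subspace_def by simp
    moreover have "columns (M0 xi) \<subseteq> H"
      using \<open>xi$j = 0\<close> by (auto simp: H_def columns_def column_def M0_def diag_mat_def)
    ultimately have "span (columns (M0 xi)) \<subseteq> H"
      using span_minimal by blast
    moreover obtain A' where "A ** A' = mat 1"
      using A unfolding invertible_def by blast
    then have "span (columns A) = UNIV"
      using matrix_right_invertible_span_columns span_vec_eq by blast
    moreover have "span (columns A) \<subseteq> span (columns (M0 xi))"
      using est unfolding estimable_def by (meson span_minimal subspace_span)
    ultimately have "axis j 1 \<in> H"
      by blast
    then show False
      by (simp add: H_def)
  qed
qed

lemma D_optimal_iff_recip_poly_min:
  fixes A Sg :: "real^'n^'n" and xs :: "real^'n"
  assumes s2: "0 < s2" and psd: "\<forall>x. 0 \<le> x \<bullet> (Sg *v x)" and A: "invertible A"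
    and design: "is_design I xs" and xs: "\<forall>j. 0 < xs$j"
  shows "D_optimal I s2 Sg A xs \<longleftrightarrow>
    (\<forall>w. (\<forall>i. 0 < w$i) \<and> (\<Sum>i\<in>UNIV. w$i) = (\<Sum>i\<in>UNIV. xs$i)
       \<longrightarrow> recip_poly (minor_coeff s2 Sg) xs \<le> recip_poly (minor_coeff s2 Sg) w)"
proof -
  let ?c = "minor_coeff s2 Sg"
  have total: "(\<Sum>i\<in>UNIV. xs$i) = I"
    using design by (simp add: is_design_def)
  have admissible: "is_design I w \<and> estimable A w \<longleftrightarrow> (\<forall>i. 0 < w$i) \<and> (\<Sum>i\<in>UNIV. w$i) = (\<Sum>i\<in>UNIV. xs$i)"
    for w
    using estimable_iff_pos[OF A, of w] total unfolding is_design_def by (auto simp: less_imp_le)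
  have ln_det_le: "ln (det (Mbeta s2 Sg A w)) \<le> ln (det (Mbeta s2 Sg A xs))
      \<longleftrightarrow> recip_poly ?c xs \<le> recip_poly ?c w" if w: "\<forall>i. 0 < w$i" for w
  proof -
    have "0 < (det A)\<^sup>2"
      using A by (simp add: invertible_det_nz)
    moreover have "0 < recip_poly ?c w" "0 < recip_poly ?c xs"
      using recip_poly_minor_coeff_pos[OF s2 psd] w xs by auto
    ultimately show ?thesis
      unfolding det_Mbeta[OF s2 psd w] det_Mbeta[OF s2 psd xs]
      by (simp add: divide_le_eq le_divide_eq)
  qed
  show ?thesis
    unfolding D_optimal_def using design xs admissible ln_det_le by blast
qed

lemma optimality_condition_iff:
  fixes Sg :: "real^'n^'n" and x :: "real^'n"
  assumes s2: "0 < s2" and psd: "\<forall>v. 0 \<le> v \<bullet> (Sg *v v)" and x: "\<forall>i. 0 < x$i"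
  shows "(\<forall>j. I * (matrix_inv (M0 x) ** matrix_inv (s2 *\<^sub>R matrix_inv (M0 x) + Sg)
                ** matrix_inv (M0 x)) $ j $ j
         = trace (matrix_inv (s2 *\<^sub>R matrix_inv (M0 x) + Sg) ** matrix_inv (M0 x)))
     \<longleftrightarrow> (\<forall>j. I * recip_poly_part (minor_coeff s2 Sg) x j / x$j
              = (\<Sum>i\<in>UNIV. recip_poly_part (minor_coeff s2 Sg) x i))"
proof -
  let ?c = "minor_coeff s2 Sg"
  let ?G = "matrix_inv (s2 *\<^sub>R matrix_inv (M0 x) + Sg)"
  define \<kappa> where "\<kappa> = s2 * recip_poly ?c x"
  have "0 < \<kappa>"
    unfolding \<kappa>_def using s2 recip_poly_minor_coeff_pos[OF s2 psd x] by simp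
  have G_diag: "?G $ j $ j = x$j * recip_poly_part ?c x j / \<kappa>" for j
    using design_matrix_inv_diag[OF s2 psd x, of j] s2 recip_poly_minor_coeff_pos[OF s2 psd x]
    unfolding \<kappa>_def by (simp add: field_simps)
  have inv_M0: "matrix_inv (M0 x) = diag_mat (\<chi> i. 1 / x$i)"
    unfolding M0_def using x by (simp add: matrix_inv_diag_mat less_imp_neq[symmetric])
  have lhs: "(matrix_inv (M0 x) ** ?G ** matrix_inv (M0 x)) $ j $ j = recip_poly_part ?c x j / x$j / \<kappa>" for j
  proof -
    have "(matrix_inv (M0 x) ** ?G ** matrix_inv (M0 x)) $ j $ j = ?G $ j $ j / (x$j)\<^sup>2"
      unfolding inv_M0 by (simp add: mult_diag_mat_component diag_mat_mult_component power2_eq_square)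
    then show ?thesis
      using x[rule_format, of j] by (simp add: G_diag power2_eq_square)
  qed
  have "trace (?G ** matrix_inv (M0 x)) = (\<Sum>i\<in>UNIV. ?G $ i $ i / x$i)"
    unfolding trace_def inv_M0 by (simp add: mult_diag_mat_component)
  also have "\<dots> = (\<Sum>i\<in>UNIV. recip_poly_part ?c x i) / \<kappa>"
    unfolding G_diag sum_divide_distrib using x by (simp add: less_imp_neq[symmetric])
  finally have rhs: "trace (?G ** matrix_inv (M0 x)) = (\<Sum>i\<in>UNIV. recip_poly_part ?c x i) / \<kappa>" .
  have cancel: "I * (a / y / \<kappa>) = b / \<kappa> \<longleftrightarrow> I * a / y = b" for a b y
    using \<open>0 < \<kappa>\<close> by (metis divide_cancel_right less_irrefl times_divide_eq_right)
  show ?thesis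
    unfolding lhs rhs cancel ..
qed

theorem corollary2:
  fixes s2 I :: real and Sg A :: "real^'n^'n" and xs :: "real^'n"
  assumes "s2 > 0" and "I > 0"
    and "transpose Sg = Sg" and "\<forall>x. 0 \<le> x \<bullet> (Sg *v x)"
    and "invertible A"
    and "is_design I xs" and "\<forall>j. xs $ j > 0"
  shows "D_optimal I s2 Sg A xs \<longleftrightarrow>
    (\<forall>j. I * (matrix_inv (M0 xs) ** matrix_inv (s2 *\<^sub>R matrix_inv (M0 xs) + Sg)
                ** matrix_inv (M0 xs)) $ j $ j
         = trace (matrix_inv (s2 *\<^sub>R matrix_inv (M0 xs) + Sg) ** matrix_inv (M0 xs)))"
proof -
  have total: "(\<Sum>i\<in>UNIV. xs$i) = I"
    using \<open>is_design I xs\<close> by (simp add: is_design_def)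
  have "D_optimal I s2 Sg A xs \<longleftrightarrow>
    (\<forall>w. (\<forall>i. 0 < w$i) \<and> (\<Sum>i\<in>UNIV. w$i) = (\<Sum>i\<in>UNIV. xs$i)
       \<longrightarrow> recip_poly (minor_coeff s2 Sg) xs \<le> recip_poly (minor_coeff s2 Sg) w)"
    using assms by (intro D_optimal_iff_recip_poly_min) auto
  also have "\<dots> \<longleftrightarrow> (\<forall>j. I * recip_poly_part (minor_coeff s2 Sg) xs j / xs$j
                     = (\<Sum>i\<in>UNIV. recip_poly_part (minor_coeff s2 Sg) xs i))"
    using recip_poly_min_iff[OF minor_coeff_nonneg[OF \<open>s2 > 0\<close> \<open>\<forall>x. 0 \<le> x \<bullet> (Sg *v x)\<close>] \<open>\<forall>j. xs $ j > 0\<close>]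
    unfolding total .
  finally show ?thesis
    unfolding optimality_condition_iff[OF \<open>s2 > 0\<close> \<open>\<forall>x. 0 \<le> x \<bullet> (Sg *v x)\<close> \<open>\<forall>j. xs $ j > 0\<close>] .
qed

end
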